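(* There exists $A\in(0,\infty)$ depending only on the coefficients of the polynomial $P$ such that for all $\tau\in\mathbb{R}$ and $c\in(1,\infty)$ it holds $P(\tau,c)\ge \tau^n/(2n)-A\,c^{n/2}$.
   Context: $n\in2\mathbb{N}_+$, $n\ge4$; $P(\tau)=\sum_{m=0}^na_m\tau^m$ with $a_0,\dots,a_{n-1}\in\mathbb{R}$, $a_n=1/n$; and $P(\tau,c)=\sum_{m=0}^n a_m\sum_{k=0}^{\lfloor m/2\rfloor}\frac{(-1)^k m!}{(m-2k)!k!2^k}c^k\tau^{m-2k}$. *)

theory Defs
  imports Complex_Main
begin

definition Pc :: "nat \<Rightarrow> (nat \<Rightarrow> real) \<Rightarrow> real \<Rightarrow> real \<Rightarrow> real" where
  "Pc n a \<tau> c = (\<Sum>m = 0..n. a m * (\<Sum>k = 0..m div 2.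
      (-1) ^ k * fact m / (fact (m - 2 * k) * fact k * 2 ^ k) * c ^ k * \<tau> ^ (m - 2 * k)))"

end

theory Submission
  imports Defs
begin

text \<open>Every term of P(\<tau>, c) other than the leading one is a multiple of c^k \<tau>^j with
  2k + j \<le> n and j < n. Comparing |\<tau>| with M \<surd>c, such a monomial is at most
  \<tau>^n / M + M^n c^(n/2). Taking M = 2nB + 1, where B is the sum of the absolute values
  of the coefficients, the contributions \<tau>^n B / M use up at most half of the leading
  term \<tau>^n / n, and the rest is O(c^(n/2)).\<close>

definition Pc_coeff :: "(nat \<Rightarrow> real) \<Rightarrow> nat \<Rightarrow> nat \<Rightarrow> real" where
  "Pc_coeff a m k = a m * ((-1) ^ k * fact m / (fact (m - 2 * k) * fact k * 2 ^ k))"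

definition Pc_index :: "nat \<Rightarrow> (nat \<times> nat) set" where
  "Pc_index n = (SIGMA m:{0..n}. {0..m div 2})"

definition Pc_coeff_sum :: "nat \<Rightarrow> (nat \<Rightarrow> real) \<Rightarrow> real" where
  "Pc_coeff_sum n a = (\<Sum>(m, k) \<in> Pc_index n. \<bar>Pc_coeff a m k\<bar>)"

lemma Pc_eq_sum_Pc_index:
  "Pc n a \<tau> c = (\<Sum>(m, k) \<in> Pc_index n. Pc_coeff a m k * c ^ k * \<tau> ^ (m - 2 * k))"
  unfolding Pc_def Pc_coeff_def Pc_index_def
  by (simp add: sum.Sigma[symmetric] sum_distrib_left mult.assoc)

lemma Pc_coeff_sum_nonneg: "Pc_coeff_sum n a \<ge> 0"
  unfolding Pc_coeff_sum_def by (intro sum_nonneg) auto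

lemma sum_ge_term_minus_bound:
  fixes f g :: "'a \<Rightarrow> real"
  assumes "finite I" and "i \<in> I"
    and "\<And>j. j \<in> I - {i} \<Longrightarrow> \<bar>f j\<bar> \<le> g j"
    and "\<And>j. j \<in> I \<Longrightarrow> g j \<ge> 0"
  shows "sum f I \<ge> f i - sum g I"
proof -
  have "- g j \<le> f j" if "j \<in> I - {i}" for j
    using assms(3)[OF that] by linarith
  hence "- sum g (I - {i}) \<le> sum f (I - {i})"
    using sum_mono[of "I - {i}" "\<lambda>j. - g j" f] by (simp add: sum_negf)
  moreover have "sum g (I - {i}) \<le> sum g I"
    using assms by (intro sum_mono2) auto
  moreover have "sum f I = f i + sum f (I - {i})"
    using assms(1,2) by (simp add: sum.remove)
  ultimately show ?thesis by linarith
qed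

lemma monomial_le_power_bound:
  fixes s x M :: real
  assumes s: "s \<ge> 1" and x: "x \<ge> 0" and M: "M \<ge> 1" and ij: "i + j \<le> n" and "j < n"
  shows "s ^ i * x ^ j \<le> x ^ n / M + M ^ n * s ^ n"
proof (cases "x \<le> M * s")
  case True
  have "s ^ i * x ^ j \<le> s ^ i * (M * s) ^ j"
    using True x s by (intro mult_left_mono power_mono) auto
  also have "\<dots> = M ^ j * s ^ (i + j)" by (simp add: power_mult_distrib power_add)
  also have "\<dots> \<le> M ^ n * s ^ n"
    using s M ij \<open>j < n\<close> by (intro mult_mono power_increasing) auto
  also have "\<dots> \<le> x ^ n / M + M ^ n * s ^ n" using x M by simp
  finally show ?thesis .
next
  case False
  hence xs: "s \<le> x / M" using M by (simp add: field_simps)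
  have "s ^ i \<le> s ^ (n - j)" using s ij by (intro power_increasing) auto
  also have "\<dots> \<le> (x / M) ^ (n - j)" using xs s by (intro power_mono) auto
  finally have "s ^ i * x ^ j \<le> (x / M) ^ (n - j) * x ^ j" using x by (simp add: mult_right_mono)
  also have "\<dots> = x ^ n / M ^ (n - j)"
    using \<open>j < n\<close> by (simp add: power_divide power_add[symmetric])
  also have "\<dots> \<le> x ^ n / M"
  proof -
    have "M ^ 1 \<le> M ^ (n - j)" using M \<open>j < n\<close> by (intro power_increasing) auto
    thus ?thesis using M x by (intro divide_left_mono) auto
  qed
  also have "\<dots> \<le> x ^ n / M + M ^ n * s ^ n" using s M by simp
  finally show ?thesis .
qed

lemma Pc_monomial_le:
  fixes \<tau> c M :: real
  assumes "even n" and c: "c \<ge> 1" and M: "M \<ge> 1"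
    and "m \<le> n" and "k \<le> m div 2" and "(m, k) \<noteq> (n, 0)"
  shows "\<bar>c ^ k * \<tau> ^ (m - 2 * k)\<bar> \<le> \<tau> ^ n / M + M ^ n * c ^ (n div 2)"
proof -
  have sqrt_pow: "sqrt c ^ (2 * l) = c ^ l" for l
    using c by (simp add: power_mult)
  have "\<bar>c ^ k * \<tau> ^ (m - 2 * k)\<bar> = sqrt c ^ (2 * k) * \<bar>\<tau>\<bar> ^ (m - 2 * k)"
    using c by (simp add: sqrt_pow abs_mult power_abs)
  also have "\<dots> \<le> \<bar>\<tau>\<bar> ^ n / M + M ^ n * sqrt c ^ n"
    using assms by (intro monomial_le_power_bound) auto
  also have "\<dots> = \<tau> ^ n / M + M ^ n * c ^ (n div 2)"
    using \<open>even n\<close> by (metis dvd_mult_div_cancel power_even_abs sqrt_pow)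
  finally show ?thesis .
qed

lemma Pc_ge_leading_term:
  fixes \<tau> c M :: real
  assumes "even n" and "c \<ge> 1" and M: "M \<ge> 1"
  shows "Pc n a \<tau> c \<ge> a n * \<tau> ^ n - Pc_coeff_sum n a * (\<tau> ^ n / M + M ^ n * c ^ (n div 2))"
proof -
  define Q where "Q = \<tau> ^ n / M + M ^ n * c ^ (n div 2)"
  have "finite (Pc_index n)" and "(n, 0) \<in> Pc_index n" unfolding Pc_index_def by auto
  have "\<bar>Pc_coeff a m k * c ^ k * \<tau> ^ (m - 2 * k)\<bar> \<le> \<bar>Pc_coeff a m k\<bar> * Q"
    if "(m, k) \<in> Pc_index n - {(n, 0)}" for m k
    using Pc_monomial_le[OF \<open>even n\<close> \<open>c \<ge> 1\<close> M, of m k \<tau>] that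
    by (auto simp: Pc_index_def Q_def abs_mult mult.assoc intro!: mult_left_mono)
  moreover have "Q \<ge> 0"
    unfolding Q_def using M \<open>c \<ge> 1\<close> \<open>even n\<close> by (simp add: zero_le_even_power)
  ultimately have
    "Pc_coeff a n 0 * \<tau> ^ n - (\<Sum>(m, k) \<in> Pc_index n. \<bar>Pc_coeff a m k\<bar> * Q) \<le> Pc n a \<tau> c"
    unfolding Pc_eq_sum_Pc_index
    using sum_ge_term_minus_bound[OF \<open>finite (Pc_index n)\<close> \<open>(n, 0) \<in> Pc_index n\<close>,
        of "\<lambda>(m, k). Pc_coeff a m k * c ^ k * \<tau> ^ (m - 2 * k)" "\<lambda>(m, k). \<bar>Pc_coeff a m k\<bar> * Q"]
    by auto
  thus ?thesis
    by (simp add: Q_def Pc_coeff_def Pc_coeff_sum_def sum_distrib_right case_prod_unfold)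
qed

theorem mainTheorem3:
  fixes n :: nat and a :: "nat \<Rightarrow> real"
  assumes "even n" and "n \<ge> 4" and "a n = 1 / real n"
  shows "\<exists>A>0. \<forall>\<tau> c :: real. c > 1 \<longrightarrow>
           Pc n a \<tau> c \<ge> \<tau> ^ n / (2 * real n) - A * c ^ (n div 2)"
proof -
  define B where "B = Pc_coeff_sum n a"
  define M where "M = 2 * real n * B + 1"
  define A where "A = B * M ^ n + 1"
  have B: "B \<ge> 0" unfolding B_def by (rule Pc_coeff_sum_nonneg)
  hence M: "M \<ge> 1" unfolding M_def by simp
  have "B / M \<le> 1 / (2 * real n)"
    using assms(2) B unfolding M_def by (simp add: divide_simps add_nonneg_pos)
  hence leading_absorbed: "\<tau> ^ n * (B / M) \<le> \<tau> ^ n / (2 * real n)" for \<tau> :: real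
    using mult_left_mono[OF _ zero_le_even_power[OF \<open>even n\<close>]] by fastforce
  have "A > 0" unfolding A_def using B M by (simp add: add_nonneg_pos)
  moreover have "Pc n a \<tau> c \<ge> \<tau> ^ n / (2 * real n) - A * c ^ (n div 2)"
    if "c > 1" for \<tau> c :: real
  proof -
    have "B * M ^ n * c ^ (n div 2) \<le> A * c ^ (n div 2)"
      unfolding A_def using \<open>c > 1\<close> by simp
    with leading_absorbed[of \<tau>]
    have "\<tau> ^ n / (2 * real n) - A * c ^ (n div 2)
        \<le> a n * \<tau> ^ n - B * (\<tau> ^ n / M + M ^ n * c ^ (n div 2))"
      using assms(3) by (simp add: field_simps)
    also have "\<dots> \<le> Pc n a \<tau> c"
      unfolding B_def using Pc_ge_leading_term[OF \<open>even n\<close> _ M] \<open>c > 1\<close> by simp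
    finally show ?thesis .
  qed
  ultimately show ?thesis by blast
qed

end
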